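(* Let $S$ be an intra-regular $\Gamma$-AG$^{**}$-groupoid and let $I_s$ be the set of all two-sided $\Gamma$-ideals of $S$. Then for $A,B\in I_s$ we have $A\Gamma B\in I_s$, and $(I_s,\ (A,B)\mapsto A\Gamma B)$ is a semilattice: the operation is commutative, associative and idempotent ($A\Gamma B=B\Gamma A$, $(A\Gamma B)\Gamma C=A\Gamma(B\Gamma C)$, $A\Gamma A=A$).
   Context: Let $S$ and $\Gamma$ be nonempty sets with a map $S\times\Gamma\times S\to S$, $(x,\gamma,y)\mapsto x\gamma y$. $S$ is a $\Gamma$-AG-groupoid if $(x\gamma y)\delta z=(z\gamma y)\delta x$ for all $x,y,z\in S$, $\gamma,\delta\in\Gamma$; it is a $\Gamma$-AG$^{**}$-groupoid if moreover $a\alpha(b\beta c)=b\alpha(a\beta c)$ for all $a,b,c\in S$, $\alpha,\beta\in\Gamma$. For subsets $A,B\subseteq S$, $A\Gamma B=\{a\gamma b: a\in A,\gamma\in\Gamma,b\in B\}$. $S$ is intra-regular if for every $a\in S$ there exist $x,y\in S$ and $\beta,\gamma,\delta\in\Gamma$ with $a=(x\beta(a\delta a))\gamma y$. A nonempty subset $A$ is a two-sided $\Gamma$-ideal if $S\Gamma A\subseteq A$ and $A\Gamma S\subseteq A$. *)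

theory Defs
  imports Main
begin

(* S is modelled as the type 's, Gamma as the type 'g (both nonempty sets);
   the ternary operation (x, gamma, y) |-> x gamma y is  m x gamma y. *)

definition gamma_AG :: "('s \<Rightarrow> 'g \<Rightarrow> 's \<Rightarrow> 's) \<Rightarrow> bool" where
  "gamma_AG m \<longleftrightarrow> (\<forall>x y z \<gamma> \<delta>. m (m x \<gamma> y) \<delta> z = m (m z \<gamma> y) \<delta> x)"

definition gamma_AGss :: "('s \<Rightarrow> 'g \<Rightarrow> 's \<Rightarrow> 's) \<Rightarrow> bool" where
  "gamma_AGss m \<longleftrightarrow> gamma_AG m \<and> (\<forall>a b c \<alpha> \<beta>. m a \<alpha> (m b \<beta> c) = m b \<alpha> (m a \<beta> c))"

definition gset_mult :: "('s \<Rightarrow> 'g \<Rightarrow> 's \<Rightarrow> 's) \<Rightarrow> 's set \<Rightarrow> 's set \<Rightarrow> 's set" where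
  "gset_mult m A B = {m a \<gamma> b | a \<gamma> b. a \<in> A \<and> b \<in> B}"

definition intra_regular :: "('s \<Rightarrow> 'g \<Rightarrow> 's \<Rightarrow> 's) \<Rightarrow> bool" where
  "intra_regular m \<longleftrightarrow> (\<forall>a. \<exists>x y \<beta> \<gamma> \<delta>. a = m (m x \<beta> (m a \<delta> a)) \<gamma> y)"

definition two_sided_gamma_ideal :: "('s \<Rightarrow> 'g \<Rightarrow> 's \<Rightarrow> 's) \<Rightarrow> 's set \<Rightarrow> bool" where
  "two_sided_gamma_ideal m A \<longleftrightarrow> A \<noteq> {} \<and> gset_mult m UNIV A \<subseteq> A \<and> gset_mult m A UNIV \<subseteq> A"

end

theory Submission
  imports Defs
begin

(* In an intra-regular Gamma-AG**-groupoid the product of two-sided Gamma-ideals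
   is their intersection: A Gamma B = A \<inter> B.  Once this is known, the semilattice
   laws for Gamma-multiplication of ideals are just the semilattice laws of \<inter>. *)

lemma gset_mult_iff:
  "c \<in> gset_mult m A B \<longleftrightarrow> (\<exists>a \<gamma> b. a \<in> A \<and> b \<in> B \<and> c = m a \<gamma> b)"
  unfolding gset_mult_def by blast

lemma left_ideal_closed:
  assumes "gset_mult m UNIV A \<subseteq> A" and "a \<in> A"
  shows "m x \<gamma> a \<in> A"
  using assms unfolding gset_mult_def by blast

lemma right_ideal_closed:
  assumes "gset_mult m A UNIV \<subseteq> A" and "a \<in> A"
  shows "m a \<gamma> x \<in> A"
  using assms unfolding gset_mult_def by blast

lemma gset_mult_subset_Int:
  assumes "gset_mult m A UNIV \<subseteq> A" and "gset_mult m UNIV B \<subseteq> B"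
  shows "gset_mult m A B \<subseteq> A \<inter> B"
  using assms unfolding gset_mult_def by blast

(* The factorisation behind the reverse inclusion: by intra-regularity
   a = (x \<beta> (a \<delta> a)) \<gamma> y; the AG** law turns x \<beta> (a \<delta> a) into a \<beta> (x \<delta> a),
   and the left invertive law then swaps a and y. *)
lemma intra_regular_factor:
  fixes m :: "'s \<Rightarrow> 'g \<Rightarrow> 's \<Rightarrow> 's"
  assumes ss: "gamma_AGss m" and ir: "intra_regular m"
  shows "\<exists>x y \<beta> \<gamma> \<delta>. a = m (m y \<beta> (m x \<delta> a)) \<gamma> a"
proof -
  obtain x y \<beta> \<gamma> \<delta> where a: "a = m (m x \<beta> (m a \<delta> a)) \<gamma> y"
    using ir unfolding intra_regular_def by blast
  have medial: "m x \<beta> (m a \<delta> a) = m a \<beta> (m x \<delta> a)"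
    using ss unfolding gamma_AGss_def by blast
  have invertive: "m (m a \<beta> (m x \<delta> a)) \<gamma> y = m (m y \<beta> (m x \<delta> a)) \<gamma> a"
    using ss unfolding gamma_AGss_def gamma_AG_def by blast
  have "a = m (m y \<beta> (m x \<delta> a)) \<gamma> a"
    using a medial invertive by simp
  then show ?thesis by blast
qed

lemma Int_subset_gset_mult:
  assumes "gamma_AGss m" and "intra_regular m" and A: "gset_mult m UNIV A \<subseteq> A"
  shows "A \<inter> B \<subseteq> gset_mult m A B"
proof
  fix a assume a: "a \<in> A \<inter> B"
  obtain x y \<beta> \<gamma> \<delta> where fac: "a = m (m y \<beta> (m x \<delta> a)) \<gamma> a"
    using intra_regular_factor[OF assms(1,2)] by blast
  have "m y \<beta> (m x \<delta> a) \<in> A"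
    using A a by (blast intro: left_ideal_closed)
  then show "a \<in> gset_mult m A B"
    using a fac unfolding gset_mult_iff by blast
qed

lemma gset_mult_ideals_eq_Int:
  assumes "gamma_AGss m" and "intra_regular m"
    and A: "two_sided_gamma_ideal m A" and B: "two_sided_gamma_ideal m B"
  shows "gset_mult m A B = A \<inter> B"
proof (rule equalityI)
  show "gset_mult m A B \<subseteq> A \<inter> B"
    using A B unfolding two_sided_gamma_ideal_def by (intro gset_mult_subset_Int) simp_all
  show "A \<inter> B \<subseteq> gset_mult m A B"
    using assms(1,2) A unfolding two_sided_gamma_ideal_def by (intro Int_subset_gset_mult) simp_all
qed

(* Two-sided Gamma-ideals are closed under intersection; the intersection is
   nonempty because it contains a \<gamma> b for any a \<in> A, b \<in> B. *)
lemma two_sided_gamma_ideal_Int: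
  assumes A: "two_sided_gamma_ideal m A" and B: "two_sided_gamma_ideal m B"
  shows "two_sided_gamma_ideal m (A \<inter> B)"
proof -
  obtain a b where ab: "a \<in> A" "b \<in> B"
    using A B unfolding two_sided_gamma_ideal_def by blast
  have "m a \<gamma> b \<in> A \<inter> B" for \<gamma>
    using A B ab unfolding two_sided_gamma_ideal_def
    by (blast intro: left_ideal_closed right_ideal_closed)
  then have "A \<inter> B \<noteq> {}" by blast
  then show ?thesis
    using A B unfolding two_sided_gamma_ideal_def gset_mult_def by blast
qed

theorem mainTheorem19:
  fixes m :: "'s \<Rightarrow> 'g \<Rightarrow> 's \<Rightarrow> 's"
  assumes "gamma_AGss m" and "intra_regular m"
  shows "(\<forall>A B. two_sided_gamma_ideal m A \<and> two_sided_gamma_ideal m B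
              \<longrightarrow> two_sided_gamma_ideal m (gset_mult m A B))
       \<and> (\<forall>A B. two_sided_gamma_ideal m A \<and> two_sided_gamma_ideal m B
              \<longrightarrow> gset_mult m A B = gset_mult m B A)
       \<and> (\<forall>A B C. two_sided_gamma_ideal m A \<and> two_sided_gamma_ideal m B \<and> two_sided_gamma_ideal m C
              \<longrightarrow> gset_mult m (gset_mult m A B) C = gset_mult m A (gset_mult m B C))
       \<and> (\<forall>A. two_sided_gamma_ideal m A \<longrightarrow> gset_mult m A A = A)"
proof -
  note prod_eq_Int = gset_mult_ideals_eq_Int[OF assms]
  show ?thesis
  proof (intro conjI allI impI)
    fix A B C
    assume "two_sided_gamma_ideal m A \<and> two_sided_gamma_ideal m B \<and> two_sided_gamma_ideal m C"
    then show "gset_mult m (gset_mult m A B) C = gset_mult m A (gset_mult m B C)"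
      by (simp add: prod_eq_Int two_sided_gamma_ideal_Int Int_assoc)
  qed (auto simp: prod_eq_Int two_sided_gamma_ideal_Int Int_commute)
qed

end
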